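(* Let $n\ge2$, $A\in\mathbb{R}^{n\times m}$, $B\in\mathbb{R}^{m\times n}$, and let $C$ be a cycle in the DSR$^{[2]}$ graph $G^{[2]}_{A,B}$. (i) If $C$ is direct and $\pi(C)=\{W',W''\}$, then $P(C)=P(W')P(W'')$. (ii) If $C$ is twisted, then $P(C)=-P(\pi(C))$.
   Context: DSR graphs: for $A\in\mathbb{R}^{n\times m}$, $B\in\mathbb{R}^{m\times n}$, $G_{A,B}$ is the signed bipartite digraph with S-vertices $S_1,\dots,S_n$ and R-vertices $R_1,\dots,R_m$, an arc $R_j\to S_i$ of sign $\mathrm{sign}(A_{ij})$ iff $A_{ij}\ne0$, an arc $S_i\to R_j$ of sign $\mathrm{sign}(B_{ji})$ iff $B_{ji}\ne0$, with antiparallel arcs of equal sign merged into an undirected edge. Walks traverse edges consistently with orientation (empty walks allowed); the sign of a walk is the product of the signs of its edges with multiplicity (empty walk: $+1$); for a walk $W$ of even length, its parity is $P(W)=(-1)^{|W|/2}\mathrm{sign}(W)$, where $|W|$ is the number of edges with multiplicity. A cycle is a nonempty closed walk with no repeated vertex except first$=$last. DSR$^{[2]}$ graph: $\overline{\mathbf L}^A\in\mathbb{R}^{\binom n2\times mn}$ has rows indexed by $(i,j)$, $i<j$, columns by $(k,l)$, $1\le k\le m$, $1\le l\le n$, with entries $A_{jk}$ if $l=i$, $-A_{ik}$ if $l=j$, $0$ otherwise; $\underline{\mathbf L}^B\in\mathbb{R}^{mn\times\binom n2}$ has $(k,l),(i,j)$ entry $B_{kj}$ if $l=i$, $-B_{ki}$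 if $l=j$, $0$ otherwise. $G^{[2]}_{A,B}:=G_{\overline{\mathbf L}^A,\underline{\mathbf L}^B}$, with S-vertices written $ij=ji$ and R-vertices $k^l$; an edge $(ij,k^l)$ exists only if $l\in\{i,j\}$. The projection $\pi$ sends an edge $(ij,k^j)$ to the edge $(S_i,R_k)$ of $G_{A,B}$ (same direction). Direct/twisted and $\pi(C)$: let $C$ have S-vertex sequence $a_1b_1,\dots,a_{T+1}b_{T+1}=a_1b_1$, and write the segment from $a_rb_r$ to $a_{r+1}b_{r+1}$ as $(a_rb_r,k^l,a_{r+1}b_{r+1})$ with $l$ the common index; its projection is a length-2 walk from $S_x$ to $S_y$, where $x$ is the element of $\{a_r,b_r\}$ other than $l$ and $y$ that of $\{a_{r+1},b_{r+1}\}$ other than $l$. Starting from empty walks at $S_{a_1}$ and $S_{b_1}$, for $r=1,\dots,T$ append the projected segment to whichever current walk ends at $S_x$. If the final walks $W',W''$ are both closed, $C$ is direct and $\pi(C)=\{W',W''\}$; otherwise $W'$, $W''$ go from $S_{a_1}$ to $S_{b_1}$ and back respectively (or vice versa), $C$ is twisted, and $\pi(C)=W'\sqcup W''$ is the closed walk obtained by traversing them in succession. *)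

theory Defs
  imports Complex_Main
begin

datatype ('s, 'r) dsr_vertex = SV 's | RV 'r

text \<open>An undirected (merged) edge is the same as a pair of
  antiparallel arcs of equal sign, so walks are just vertex sequences following arcs.\<close>
fun dsr_arc :: "'s set \<Rightarrow> 'r set \<Rightarrow> ('s \<Rightarrow> 'r \<Rightarrow> real) \<Rightarrow> ('r \<Rightarrow> 's \<Rightarrow> real)
    \<Rightarrow> ('s, 'r) dsr_vertex \<Rightarrow> ('s, 'r) dsr_vertex \<Rightarrow> bool" where
  "dsr_arc SI RI A B (RV k) (SV i) = (i \<in> SI \<and> k \<in> RI \<and> A i k \<noteq> 0)"
| "dsr_arc SI RI A B (SV i) (RV k) = (i \<in> SI \<and> k \<in> RI \<and> B k i \<noteq> 0)"
| "dsr_arc SI RI A B _ _ = False"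

fun dsr_arc_sign :: "('s \<Rightarrow> 'r \<Rightarrow> real) \<Rightarrow> ('r \<Rightarrow> 's \<Rightarrow> real)
    \<Rightarrow> ('s, 'r) dsr_vertex \<Rightarrow> ('s, 'r) dsr_vertex \<Rightarrow> real" where
  "dsr_arc_sign A B (RV k) (SV i) = sgn (A i k)"
| "dsr_arc_sign A B (SV i) (RV k) = sgn (B k i)"
| "dsr_arc_sign A B _ _ = 1"

text \<open>A walk is a nonempty vertex list (a single vertex = the empty walk).\<close>
definition dsr_walk :: "'s set \<Rightarrow> 'r set \<Rightarrow> ('s \<Rightarrow> 'r \<Rightarrow> real) \<Rightarrow> ('r \<Rightarrow> 's \<Rightarrow> real)
    \<Rightarrow> ('s, 'r) dsr_vertex list \<Rightarrow> bool" where
  "dsr_walk SI RI A B vs \<longleftrightarrow> vs \<noteq> [] \<and>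
     (\<forall>t < length vs - 1. dsr_arc SI RI A B (vs ! t) (vs ! Suc t))"

definition walk_len :: "'v list \<Rightarrow> nat" where
  "walk_len vs = length vs - 1"

definition walk_sign :: "('s \<Rightarrow> 'r \<Rightarrow> real) \<Rightarrow> ('r \<Rightarrow> 's \<Rightarrow> real)
    \<Rightarrow> ('s, 'r) dsr_vertex list \<Rightarrow> real" where
  "walk_sign A B vs = (\<Prod>t < length vs - 1. dsr_arc_sign A B (vs ! t) (vs ! Suc t))"

definition walk_parity :: "('s \<Rightarrow> 'r \<Rightarrow> real) \<Rightarrow> ('r \<Rightarrow> 's \<Rightarrow> real)
    \<Rightarrow> ('s, 'r) dsr_vertex list \<Rightarrow> real" where
  "walk_parity A B vs = (-1) ^ (walk_len vs div 2) * walk_sign A B vs"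

definition dsr_cycle :: "'s set \<Rightarrow> 'r set \<Rightarrow> ('s \<Rightarrow> 'r \<Rightarrow> real) \<Rightarrow> ('r \<Rightarrow> 's \<Rightarrow> real)
    \<Rightarrow> ('s, 'r) dsr_vertex list \<Rightarrow> bool" where
  "dsr_cycle SI RI A B vs \<longleftrightarrow> dsr_walk SI RI A B vs \<and> walk_len vs \<ge> 1 \<and>
     hd vs = last vs \<and> distinct (tl vs)"

text \<open>Indices are 1-based. S-vertices of G^[2]: pairs (i,j) with 1 \<le> i < j \<le> n
  (the vertex ij = ji); R-vertices: pairs (k,l) = k^l with 1 \<le> k \<le> m, 1 \<le> l \<le> n.\<close>
definition SI2 :: "nat \<Rightarrow> (nat \<times> nat) set" where
  "SI2 n = {(i, j). 1 \<le> i \<and> i < j \<and> j \<le> n}"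

definition RI2 :: "nat \<Rightarrow> nat \<Rightarrow> (nat \<times> nat) set" where
  "RI2 n m = {(k, l). 1 \<le> k \<and> k \<le> m \<and> 1 \<le> l \<and> l \<le> n}"

definition Lbar :: "(nat \<Rightarrow> nat \<Rightarrow> real) \<Rightarrow> nat \<times> nat \<Rightarrow> nat \<times> nat \<Rightarrow> real" where
  "Lbar A ij kl = (case ij of (i, j) \<Rightarrow> case kl of (k, l) \<Rightarrow>
     if l = i then A j k else if l = j then - A i k else 0)"

definition Lunder :: "(nat \<Rightarrow> nat \<Rightarrow> real) \<Rightarrow> nat \<times> nat \<Rightarrow> nat \<times> nat \<Rightarrow> real" where
  "Lunder B kl ij = (case kl of (k, l) \<Rightarrow> case ij of (i, j) \<Rightarrow>
     if l = i then B k j else if l = j then - B k i else 0)"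

definition other :: "nat \<times> nat \<Rightarrow> nat \<Rightarrow> nat" where
  "other p l = (if l = fst p then snd p else fst p)"

fun segments :: "('s, 'r) dsr_vertex list \<Rightarrow> ('s \<times> 'r \<times> 's) list" where
  "segments (SV p # RV q # SV p' # rest) = (p, q, p') # segments (SV p' # rest)"
| "segments _ = []"

definition proj_step :: "(nat, nat) dsr_vertex list \<times> (nat, nat) dsr_vertex list
    \<Rightarrow> (nat \<times> nat) \<times> (nat \<times> nat) \<times> (nat \<times> nat)
    \<Rightarrow> (nat, nat) dsr_vertex list \<times> (nat, nat) dsr_vertex list" where
  "proj_step W seg = (case W of (W1, W2) \<Rightarrow> case seg of (p, (k, l), p') \<Rightarrow>
     (let x = other p l; y = other p' l in
       if last W1 = SV x then (W1 @ [RV k, SV y], W2) else (W1, W2 @ [RV k, SV y])))"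

definition proj_walks :: "nat \<Rightarrow> nat \<Rightarrow> (nat \<times> nat, nat \<times> nat) dsr_vertex list
    \<Rightarrow> (nat, nat) dsr_vertex list \<times> (nat, nat) dsr_vertex list" where
  "proj_walks a1 b1 C = foldl proj_step ([SV a1], [SV b1]) (segments C)"

definition is_direct :: "nat \<Rightarrow> nat \<Rightarrow> (nat \<times> nat, nat \<times> nat) dsr_vertex list \<Rightarrow> bool" where
  "is_direct a1 b1 C = (case proj_walks a1 b1 C of (W1, W2) \<Rightarrow>
     hd W1 = last W1 \<and> hd W2 = last W2)"

definition proj_twisted :: "nat \<Rightarrow> nat \<Rightarrow> (nat \<times> nat, nat \<times> nat) dsr_vertex list
    \<Rightarrow> (nat, nat) dsr_vertex list" where
  "proj_twisted a1 b1 C = (case proj_walks a1 b1 C of (W1, W2) \<Rightarrow> W1 @ tl W2)"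

end

theory Submission
  imports Defs
begin

text \<open>Each segment (ab, k^l, cd) of C has sign \<open>sgn (Lunder B (k,l) (a,b)) * sgn (Lbar A (c,d) (k,l))\<close>,
  which equals the sign \<open>sgn (B k x) * sgn (A y k)\<close> of its projection up to the factor \<open>\<plusminus>1\<close>
  recording whether l is the smaller index of ab and of cd.  These factors telescope: if
  \<open>orient W\<close> is \<open>+1\<close> or \<open>-1\<close> according as the first projected walk currently ends at the smaller
  or the larger index, then along C the product \<open>sign W' * sign W'' * orient W'\<close> is multiplied
  by exactly the sign of C.
  At the end, \<open>orient\<close> has returned to its initial value iff C is direct, whence
  \<open>sign W' * sign W'' = \<plusminus> sign C\<close>.  Lengths add up, and both projected walks have even length, so
  the factors \<open>(-1)^(|W|/2)\<close> of the parities multiply correctly.\<close>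

lemma dsr_walk_Cons_Cons:
  "dsr_walk SI RI A B (u # v # vs) \<longleftrightarrow> dsr_arc SI RI A B u v \<and> dsr_walk SI RI A B (v # vs)"
  unfolding dsr_walk_def by (auto simp: less_Suc_eq_0_disj)

lemma walk_sign_singleton [simp]: "walk_sign A B [v] = 1"
  unfolding walk_sign_def by simp

lemma walk_sign_Cons_Cons:
  "walk_sign A B (u # v # vs) = dsr_arc_sign A B u v * walk_sign A B (v # vs)"
  unfolding walk_sign_def by (simp only: length_Cons diff_Suc_1 prod.lessThan_Suc_shift) simp

lemma walk_sign_append_tl:
  "W \<noteq> [] \<Longrightarrow> V \<noteq> [] \<Longrightarrow> last W = hd V \<Longrightarrow>
    walk_sign A B (W @ tl V) = walk_sign A B W * walk_sign A B V"
proof (induction W rule: induct_list012)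
  case (2 u)
  then show ?case by (cases V) auto
next
  case (3 u v vs)
  then show ?case by (simp add: walk_sign_Cons_Cons)
qed simp

lemma walk_len_append_tl:
  "W \<noteq> [] \<Longrightarrow> V \<noteq> [] \<Longrightarrow> walk_len (W @ tl V) = walk_len W + walk_len V"
  unfolding walk_len_def by (cases W; cases V) auto

lemma walk_sign_snoc_snoc:
  "W \<noteq> [] \<Longrightarrow> walk_sign A B (W @ [u, v]) =
     walk_sign A B W * dsr_arc_sign A B (last W) u * dsr_arc_sign A B u v"
  using walk_sign_append_tl[of W "[last W, u, v]" A B] by (simp add: walk_sign_Cons_Cons)

lemma walk_parity_mult:
  assumes "even (walk_len V)" "even (walk_len W)"
  shows "walk_parity A B V * walk_parity A B W =
    (-1) ^ ((walk_len V + walk_len W) div 2) * (walk_sign A B V * walk_sign A B W)"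
  using assms by (auto simp: walk_parity_def power_add[symmetric] elim!: evenE)

lemma walk_parity_append_tl:
  assumes "W \<noteq> []" "V \<noteq> []" "last W = hd V" "even (walk_len W)" "even (walk_len V)"
  shows "walk_parity A B (W @ tl V) = walk_parity A B W * walk_parity A B V"
  using assms walk_parity_mult[OF assms(4,5), of A B]
  by (simp add: walk_parity_def walk_sign_append_tl walk_len_append_tl power_add)

lemma dsr_walk_S_to_S_cases:
  assumes "dsr_walk SI RI A B C" "hd C = SV p" "last C = SV p'"
  obtains "C = [SV p]"
  | q p'' C' where "C = SV p # RV q # SV p'' # C'"
      "dsr_arc SI RI A B (SV p) (RV q)" "dsr_arc SI RI A B (RV q) (SV p'')"
      "dsr_walk SI RI A B (SV p'' # C')" "last (SV p'' # C') = SV p'"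
proof -
  obtain rest where C: "C = SV p # rest"
    using assms(1,2) unfolding dsr_walk_def by (cases C) auto
  show thesis
  proof (cases rest)
    case Nil
    with C that(1) show thesis by simp
  next
    case (Cons u rest')
    with C assms(1) have u: "dsr_arc SI RI A B (SV p) u" "dsr_walk SI RI A B (u # rest')"
      by (simp_all add: dsr_walk_Cons_Cons)
    then obtain q where q: "u = RV q" by (cases u) auto
    with assms(3) C Cons obtain v rest'' where v: "rest' = v # rest''" by (cases rest') auto
    with u q have "dsr_arc SI RI A B (RV q) v" "dsr_walk SI RI A B (v # rest'')"
      by (simp_all add: dsr_walk_Cons_Cons)
    moreover from this obtain p'' where "v = SV p''" by (cases v) auto
    ultimately show thesis using that(2) C Cons q v u assms(3) by auto
  qed
qed

lemma SI2_fst_less_snd: "p \<in> SI2 n \<Longrightarrow> fst p < snd p"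
  unfolding SI2_def by auto

lemma sgn_Lunder:
  "a \<noteq> b \<Longrightarrow> l = a \<or> l = b \<Longrightarrow>
    sgn (Lunder B (k, l) (a, b)) = (if l = a then 1 else -1) * sgn (B k (other (a, b) l))"
  by (auto simp: Lunder_def other_def sgn_minus)

lemma sgn_Lbar:
  "c \<noteq> d \<Longrightarrow> l = c \<or> l = d \<Longrightarrow>
    sgn (Lbar A (c, d) (k, l)) = (if l = c then 1 else -1) * sgn (A (other (c, d) l) k)"
  by (auto simp: Lbar_def other_def sgn_minus)

definition orient :: "(nat, nat) dsr_vertex list \<Rightarrow> nat \<times> nat \<Rightarrow> real" where
  "orient W p = (if last W = SV (fst p) then 1 else -1)"

definition proj_state :: "nat \<times> nat \<Rightarrow> (nat, nat) dsr_vertex list \<Rightarrow> (nat, nat) dsr_vertex list \<Rightarrow> bool" where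
  "proj_state p W1 W2 \<longleftrightarrow> W1 \<noteq> [] \<and> W2 \<noteq> [] \<and> even (walk_len W1) \<and> even (walk_len W2) \<and>
     (last W1 = SV (fst p) \<and> last W2 = SV (snd p) \<or> last W1 = SV (snd p) \<and> last W2 = SV (fst p))"

lemma proj_step_state:
  assumes "a < b" "c < d" "l = a \<or> l = b" "l = c \<or> l = d" "proj_state (a, b) W1 W2"
    and "proj_step (W1, W2) ((a, b), (k, l), (c, d)) = (W1', W2')"
  shows "proj_state (c, d) W1' W2'" "hd W1' = hd W1" "hd W2' = hd W2"
    "walk_len W1' + walk_len W2' = walk_len W1 + walk_len W2 + 2"
    "walk_sign A B W1' * walk_sign A B W2' * orient W1' (c, d) =
       walk_sign A B W1 * walk_sign A B W2 * orient W1 (a, b)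
       * sgn (Lunder B (k, l) (a, b)) * sgn (Lbar A (c, d) (k, l))"
  using assms
  by (auto simp: proj_step_def proj_state_def orient_def other_def Let_def walk_len_def
      walk_sign_snoc_snoc sgn_Lunder sgn_Lbar split: if_splits)

lemma proj_fold_state:
  assumes "dsr_walk (SI2 n) (RI2 n m) (Lbar A) (Lunder B) C" "hd C = SV p" "last C = SV p'"
    and "proj_state p W1 W2" "foldl proj_step (W1, W2) (segments C) = (V1, V2)"
  shows "proj_state p' V1 V2 \<and> hd V1 = hd W1 \<and> hd V2 = hd W2
    \<and> walk_len V1 + walk_len V2 = walk_len W1 + walk_len W2 + walk_len C
    \<and> walk_sign A B V1 * walk_sign A B V2 * orient V1 p' =
        walk_sign A B W1 * walk_sign A B W2 * orient W1 p * walk_sign (Lbar A) (Lunder B) C"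
  using assms
proof (induction "length C" arbitrary: C p W1 W2 rule: less_induct)
  case less
  from less.prems(1-3) show ?case
  proof (cases rule: dsr_walk_S_to_S_cases)
    case 1
    with less.prems show ?thesis by (simp add: walk_len_def)
  next
    case (2 q p'' C')
    obtain a b c d k l where abcd: "p = (a, b)" "p'' = (c, d)" "q = (k, l)"
      by (cases p, cases p'', cases q)
    have ab: "a < b" "l = a \<or> l = b"
      using 2(2) abcd by (auto simp: SI2_def Lunder_def split: if_splits)
    have cd: "c < d" "l = c \<or> l = d"
      using 2(3) abcd by (auto simp: SI2_def Lbar_def split: if_splits)
    obtain W1' W2' where step: "proj_step (W1, W2) ((a, b), (k, l), (c, d)) = (W1', W2')"
      by fastforce
    note step_state = proj_step_state[OF ab(1) cd(1) ab(2) cd(2) _ step]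
    have "foldl proj_step (W1', W2') (segments (SV p'' # C')) = (V1, V2)"
      using less.prems(5) 2(1) step abcd by (cases C') auto
    with 2 less.prems(4) step step_state abcd
    have IH: "proj_state p' V1 V2 \<and> hd V1 = hd W1' \<and> hd V2 = hd W2'
      \<and> walk_len V1 + walk_len V2 = walk_len W1' + walk_len W2' + walk_len (SV p'' # C')
      \<and> walk_sign A B V1 * walk_sign A B V2 * orient V1 p' =
          walk_sign A B W1' * walk_sign A B W2' * orient W1' p''
          * walk_sign (Lbar A) (Lunder B) (SV p'' # C')"
      by (intro less.hyps) auto
    have "walk_sign (Lbar A) (Lunder B) C = sgn (Lunder B (k, l) (a, b)) * sgn (Lbar A (c, d) (k, l))
        * walk_sign (Lbar A) (Lunder B) (SV p'' # C')"
      using 2(1) abcd by (simp add: walk_sign_Cons_Cons)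
    moreover have "walk_len C = walk_len (SV p'' # C') + 2"
      using 2(1) by (simp add: walk_len_def)
    ultimately show ?thesis
      using IH step step_state less.prems(4) abcd by (auto simp: algebra_simps)
  qed
qed

lemma dsr_cycle_hd_in_SI:
  assumes "dsr_cycle SI RI A B C" "hd C = SV p"
  shows "p \<in> SI"
proof -
  from assms obtain u rest where "C = SV p # u # rest"
    unfolding dsr_cycle_def dsr_walk_def walk_len_def
    by (cases C; cases "tl C") auto
  with assms(1) have "dsr_arc SI RI A B (SV p) u"
    unfolding dsr_cycle_def by (metis dsr_walk_Cons_Cons)
  then show ?thesis by (cases u) auto
qed

lemma proj_walks_cycle:
  assumes "dsr_cycle (SI2 n) (RI2 n m) (Lbar A) (Lunder B) C" "hd C = SV (i, j)"
    and "(a1, b1) = (i, j) \<or> (a1, b1) = (j, i)" "proj_walks a1 b1 C = (V1, V2)"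
  shows "proj_state (i, j) V1 V2" "walk_len V1 + walk_len V2 = walk_len C"
    "\<not> is_direct a1 b1 C \<Longrightarrow> last V1 = hd V2"
    "walk_sign A B V1 * walk_sign A B V2 =
       (if is_direct a1 b1 C then 1 else -1) * walk_sign (Lbar A) (Lunder B) C"
proof -
  have walk: "dsr_walk (SI2 n) (RI2 n m) (Lbar A) (Lunder B) C" and closed: "last C = SV (i, j)"
    using assms(1,2) unfolding dsr_cycle_def by auto
  have "i < j"
    using SI2_fst_less_snd[OF dsr_cycle_hd_in_SI[OF assms(1,2)]] by simp
  have "proj_state (i, j) [SV a1] [SV b1]"
    using assms(3) by (auto simp: proj_state_def walk_len_def)
  from proj_fold_state[OF walk assms(2) closed this assms(4)[unfolded proj_walks_def]]
  have state: "proj_state (i, j) V1 V2" and hd: "hd V1 = SV a1" "hd V2 = SV b1"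
    and len: "walk_len V1 + walk_len V2 = walk_len C"
    and sign: "walk_sign A B V1 * walk_sign A B V2 * orient V1 (i, j) =
      orient [SV a1] (i, j) * walk_sign (Lbar A) (Lunder B) C"
    by (auto simp: walk_len_def)
  have twisted_ends: "last V1 = SV b1 \<and> last V2 = SV a1" if "\<not> is_direct a1 b1 C"
    using that assms(3,4) hd state by (auto simp: is_direct_def proj_state_def)
  have "orient V1 (i, j) = (if is_direct a1 b1 C then 1 else -1) * orient [SV a1] (i, j)"
    using assms(3,4) hd twisted_ends \<open>i < j\<close> by (auto simp: is_direct_def orient_def)
  with sign show "walk_sign A B V1 * walk_sign A B V2 =
      (if is_direct a1 b1 C then 1 else -1) * walk_sign (Lbar A) (Lunder B) C"
    by (auto simp: orient_def split: if_splits)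
  show "proj_state (i, j) V1 V2" "walk_len V1 + walk_len V2 = walk_len C" by fact+
  show "last V1 = hd V2" if "\<not> is_direct a1 b1 C"
    using twisted_ends[OF that] hd by simp
qed

theorem proposition5p3:
  fixes n m :: nat and A B :: "nat \<Rightarrow> nat \<Rightarrow> real"
    and C :: "(nat \<times> nat, nat \<times> nat) dsr_vertex list" and a1 b1 i j :: nat
  assumes "n \<ge> 2"
    and "dsr_cycle (SI2 n) (RI2 n m) (Lbar A) (Lunder B) C"
    and "hd C = SV (i, j)"
    and "(a1, b1) = (i, j) \<or> (a1, b1) = (j, i)"
  shows "(is_direct a1 b1 C \<longrightarrow>
           walk_parity (Lbar A) (Lunder B) C =
             walk_parity A B (fst (proj_walks a1 b1 C)) * walk_parity A B (snd (proj_walks a1 b1 C)))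
       \<and> (\<not> is_direct a1 b1 C \<longrightarrow>
           walk_parity (Lbar A) (Lunder B) C = - walk_parity A B (proj_twisted a1 b1 C))"
proof -
  obtain V1 V2 where V: "proj_walks a1 b1 C = (V1, V2)" by fastforce
  note proj = proj_walks_cycle[OF assms(2-4) V]
  have parity: "walk_parity A B V1 * walk_parity A B V2 =
      (if is_direct a1 b1 C then 1 else -1) * walk_parity (Lbar A) (Lunder B) C"
    using walk_parity_mult[of V1 V2 A B] proj unfolding proj_state_def
    by (simp add: walk_parity_def)
  show ?thesis
  proof (intro conjI impI)
    assume "is_direct a1 b1 C"
    with parity V show "walk_parity (Lbar A) (Lunder B) C =
        walk_parity A B (fst (proj_walks a1 b1 C)) * walk_parity A B (snd (proj_walks a1 b1 C))"
      by simp
  next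
    assume twisted: "\<not> is_direct a1 b1 C"
    have "walk_parity A B (V1 @ tl V2) = walk_parity A B V1 * walk_parity A B V2"
      using proj(1) proj(3)[OF twisted] by (intro walk_parity_append_tl) (auto simp: proj_state_def)
    with parity V twisted show "walk_parity (Lbar A) (Lunder B) C = - walk_parity A B (proj_twisted a1 b1 C)"
      by (simp add: proj_twisted_def)
  qed
qed

end
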